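(* Let $G$ be a finite group, let $x \in G$ have prime order $p$, and let $N$ be a normal subgroup of $N_G(\langle x\rangle)$ with $|N| = p^{2k+3}$ for some integer $k \ge 0$. Suppose $x \in N$ and that there exist elements $y, \ell, g_1, \ldots, g_k, h_1, \ldots, h_k \in N \cap C_G(x)$, each of order $p$, and an element $\sigma \in N_G(\langle x, y\rangle)$ such that: (i) $y \notin \langle x\rangle$; (ii) every $g_i$ and every $h_i$ commutes with $y$, whereas $\ell$ does not commute with $y$; (iii) for all $i, j \in \{1,\ldots,k\}$, $g_j$ commutes modulo $\langle x\rangle$ with each of $g_i$, $g_i^{\sigma}$ and $h_i$; (iv) for all $i, j \in \{1,\ldots,k\}$ with $i < j$, $g_j$ commutes modulo $\langle x\rangle$ with $h_i^{\sigma}$, but for each $i$, $g_i$ does not commute modulo $\langle x\rangle$ with $h_i^{\sigma}$. Then: (a) every subset $S \subseteq \{x, y, g_1, \ldots, g_k, h_1, \ldots, h_k, h_1^{\sigma}, \ldots, h_k^{\sigma}\}$ generates a $p$-group of order at least $p^{|S|}$; (b) $N = \langle x, y, g_1, \ldots, g_k, h_1, \ldots, h_k, \ell\rangle$; (c) the group $\langle x, y, g_1, \ldots, g_k, h_1, \ldots, h_k, g_1^{\sigma}, \ldots, g_k^{\sigma}, h_1^{\sigma}, \ldots, h_k^{\sigma}\rangle$ is a normal $p$-subgroup of $C_G(\langle x, y\rangle)$.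
   Context: For $a \in G$, $a^{\sigma} = \sigma^{-1} a \sigma$. Two elements $a, b$ "commute modulo $\langle x\rangle$" means that their commutator $a^{-1}b^{-1}ab$ lies in $\langle x\rangle$. $C_G(\cdot)$ and $N_G(\cdot)$ denote centraliser and normaliser in $G$. *)

theory Defs
  imports "HOL-Algebra.Algebra"
begin

definition conjg :: "('a, 'b) monoid_scheme \<Rightarrow> 'a \<Rightarrow> 'a \<Rightarrow> 'a" where
  "conjg G a s = inv\<^bsub>G\<^esub> s \<otimes>\<^bsub>G\<^esub> a \<otimes>\<^bsub>G\<^esub> s"

definition commr :: "('a, 'b) monoid_scheme \<Rightarrow> 'a \<Rightarrow> 'a \<Rightarrow> 'a" where
  "commr G a b = inv\<^bsub>G\<^esub> a \<otimes>\<^bsub>G\<^esub> inv\<^bsub>G\<^esub> b \<otimes>\<^bsub>G\<^esub> a \<otimes>\<^bsub>G\<^esub> b"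

definition comm_mod :: "('a, 'b) monoid_scheme \<Rightarrow> 'a \<Rightarrow> 'a \<Rightarrow> 'a \<Rightarrow> bool" where
  "comm_mod G x a b \<longleftrightarrow> commr G a b \<in> generate G {x}"

definition centraliser :: "('a, 'b) monoid_scheme \<Rightarrow> 'a set \<Rightarrow> 'a set" where
  "centraliser G A = {g \<in> carrier G. \<forall>a\<in>A. g \<otimes>\<^bsub>G\<^esub> a = a \<otimes>\<^bsub>G\<^esub> g}"

definition p_group_set :: "nat \<Rightarrow> 'a set \<Rightarrow> bool" where
  "p_group_set p H \<longleftrightarrow> finite H \<and> (\<exists>n. card H = p ^ n)"

end

theory Submission
  imports Defs "HOL-Library.Product_Lexorder"
begin

text \<open>Let C be the centraliser of \<langle>x, y\<rangle> and M = N \<inter> C. As C normalises \<langle>x\<rangle> and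
  \<sigma> normalises C, both M and M^\<sigma> are normal p-subgroups of C, and hence so is
  P = M M^\<sigma>. In the order x, y, g_k, \<dots>, g_1, h_1, \<dots>, h_k,
  h_1^\<sigma>, \<dots>, h_k^\<sigma> each element lies outside a subgroup of C that contains
  all its predecessors: the elements commuting modulo \<langle>x\<rangle> with h_j^\<sigma> (for g_j),
  those whose \<sigma>-conjugate commutes modulo \<langle>x\<rangle> with g_j (for h_j), and those
  commuting modulo \<langle>x\<rangle> with g_j (for h_j^\<sigma>). Inside the p-group P such a chain
  forces every subset S of these elements to generate a subgroup of order at least p^|S|,
  which is (a). In particular |M| \<ge> p^(2k+2), while M is a proper subgroup of N because
  l \<notin> C. So M = \<langle>x, y, g_i, h_i\<rangle> has index p in N, which gives (b), and the
  group in (c) lies in P and contains M and M^\<sigma>, so it is P.\<close>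

lemma (in group) inv_mult_cancel_left [simp]:
  "a \<in> carrier G \<Longrightarrow> b \<in> carrier G \<Longrightarrow> inv a \<otimes> (a \<otimes> b) = b"
  by (simp flip: m_assoc)

lemma (in group) mult_inv_cancel_left [simp]:
  "a \<in> carrier G \<Longrightarrow> b \<in> carrier G \<Longrightarrow> a \<otimes> (inv a \<otimes> b) = b"
  by (simp flip: m_assoc)

lemma (in group) centraliser_subgroup:
  assumes "A \<subseteq> carrier G"
  shows "subgroup (centraliser G A) G"
proof (rule subgroupI)
  show "centraliser G A \<subseteq> carrier G"
    by (auto simp: centraliser_def)
  have "\<one> \<in> centraliser G A"
    using assms by (auto simp: centraliser_def)
  then show "centraliser G A \<noteq> {}"
    by blast
next
  fix c assume "c \<in> centraliser G A"
  then have c: "c \<in> carrier G" and ca: "\<And>a. a \<in> A \<Longrightarrow> c \<otimes> a = a \<otimes> c"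
    by (auto simp: centraliser_def)
  have "inv c \<otimes> a = a \<otimes> inv c" if "a \<in> A" for a
  proof -
    have a: "a \<in> carrier G"
      using that assms by auto
    have "inv c \<otimes> a = inv c \<otimes> (a \<otimes> c) \<otimes> inv c"
      using a c by (simp add: m_assoc)
    also have "\<dots> = inv c \<otimes> (c \<otimes> a) \<otimes> inv c"
      using ca[OF that] by simp
    also have "\<dots> = a \<otimes> inv c"
      using a c by (simp flip: m_assoc)
    finally show ?thesis .
  qed
  then show "inv c \<in> centraliser G A"
    using c by (auto simp: centraliser_def)
next
  fix c d assume "c \<in> centraliser G A" "d \<in> centraliser G A"
  then show "c \<otimes> d \<in> centraliser G A"
    using assms by (auto simp: centraliser_def m_assoc subset_iff) (metis m_assoc)
qed

lemma centraliser_antimono: "A \<subseteq> B \<Longrightarrow> centraliser G B \<subseteq> centraliser G A"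
  by (auto simp: centraliser_def)

lemma (in group) centraliser_generate:
  assumes "A \<subseteq> carrier G"
  shows "centraliser G (generate G A) = centraliser G A"
proof
  show "centraliser G (generate G A) \<subseteq> centraliser G A"
    by (rule centraliser_antimono) (auto intro: generate.incl)
  show "centraliser G A \<subseteq> centraliser G (generate G A)"
  proof
    fix c assume c: "c \<in> centraliser G A"
    then have "A \<subseteq> centraliser G {c}" and "c \<in> carrier G"
      using assms by (auto simp: centraliser_def)
    then have "generate G A \<subseteq> centraliser G {c}"
      by (intro generate_subgroup_incl centraliser_subgroup) auto
    then show "c \<in> centraliser G (generate G A)"
      using \<open>c \<in> carrier G\<close> by (auto simp: centraliser_def)
  qed
qed

lemma (in group) normalizer_iff:
  "H \<subseteq> carrier G \<Longrightarrow> s \<in> normalizer G H \<longleftrightarrow> s \<in> carrier G \<and> s <# H #> inv s = H"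
  by (simp add: normalizer_def stabilizer_def)

lemma lr_coset_eq_image: "s <#\<^bsub>G\<^esub> H #>\<^bsub>G\<^esub> t = (\<lambda>a. s \<otimes>\<^bsub>G\<^esub> a \<otimes>\<^bsub>G\<^esub> t) ` H"
  unfolding l_coset_def r_coset_def by auto

lemma (in group) conj_mem_normalizer:
  assumes s: "s \<in> normalizer G H" and H: "H \<subseteq> carrier G" and a: "a \<in> H"
  shows "s \<otimes> a \<otimes> inv s \<in> H"
proof -
  have "s \<in> carrier G" "s <# H #> inv s = H"
    using s H normalizer_iff by blast+
  then show ?thesis
    using a lr_coset_eq_image[of G s H "inv s"] by blast
qed

lemma (in group) conjg_mem_normalizer:
  assumes s: "s \<in> normalizer G H" and H: "H \<subseteq> carrier G" and a: "a \<in> H"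
  shows "conjg G a s \<in> H"
proof -
  have "inv s \<in> normalizer G H"
    using s subgroup.m_inv_closed[OF normalizer_imp_subgroup[OF H]] by blast
  moreover have "s \<in> carrier G"
    using s H normalizer_iff by blast
  ultimately show ?thesis
    using conj_mem_normalizer[OF _ H a, of "inv s"] by (simp add: conjg_def)
qed

lemma (in group) normalizerI:
  assumes s: "s \<in> carrier G" and H: "H \<subseteq> carrier G"
    and conj: "\<And>a. a \<in> H \<Longrightarrow> s \<otimes> a \<otimes> inv s \<in> H"
    and conj_inv: "\<And>a. a \<in> H \<Longrightarrow> inv s \<otimes> a \<otimes> s \<in> H"
  shows "s \<in> normalizer G H"
proof -
  have "a \<in> (\<lambda>a. s \<otimes> a \<otimes> inv s) ` H" if "a \<in> H" for a
  proof
    have "a \<in> carrier G"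
      using H that by blast
    then show "a = s \<otimes> (inv s \<otimes> a \<otimes> s) \<otimes> inv s"
      using s by (simp add: m_assoc)
  qed (use conj_inv that in blast)
  then have "s <# H #> inv s = H"
    using conj s by (auto simp: lr_coset_eq_image)
  then show ?thesis
    using s H normalizer_iff by blast
qed

lemma (in group) centraliser_subset_normalizer:
  assumes "H \<subseteq> carrier G"
  shows "centraliser G H \<subseteq> normalizer G H"
proof
  fix c assume c: "c \<in> centraliser G H"
  then have cc: "c \<in> carrier G" and ca: "\<And>a. a \<in> H \<Longrightarrow> c \<otimes> a = a \<otimes> c"
    by (auto simp: centraliser_def)
  have "c \<otimes> a \<otimes> inv c = a" "inv c \<otimes> a \<otimes> c = a" if "a \<in> H" for a
  proof -
    have ac: "a \<in> carrier G"
      using that assms by blast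
    show "c \<otimes> a \<otimes> inv c = a"
      using ca[OF that] ac cc by (simp add: m_assoc)
    have "inv c \<otimes> a \<otimes> c = inv c \<otimes> (c \<otimes> a)"
      using ca[OF that] ac cc by (simp add: m_assoc)
    then show "inv c \<otimes> a \<otimes> c = a"
      using ac cc by simp
  qed
  then show "c \<in> normalizer G H"
    using assms cc by (intro normalizerI) auto
qed

lemma (in group) conj_mem_centraliser:
  assumes s: "s \<in> normalizer G A" and A: "A \<subseteq> carrier G" and c: "c \<in> centraliser G A"
  shows "s \<otimes> c \<otimes> inv s \<in> centraliser G A"
proof -
  have sc: "s \<in> carrier G" and cc: "c \<in> carrier G"
    using s c A normalizer_iff by (auto simp: centraliser_def)
  have "s \<otimes> c \<otimes> inv s \<otimes> a = a \<otimes> (s \<otimes> c \<otimes> inv s)" if a: "a \<in> A" for a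
  proof -
    have b: "inv s \<otimes> a \<otimes> s \<in> A"
      using conjg_mem_normalizer[OF s A a] by (simp add: conjg_def)
    have ac: "a \<in> carrier G"
      using a A by auto
    have "s \<otimes> c \<otimes> inv s \<otimes> a = s \<otimes> (c \<otimes> (inv s \<otimes> a \<otimes> s)) \<otimes> inv s"
      using sc cc ac by (simp add: m_assoc)
    also have "\<dots> = s \<otimes> ((inv s \<otimes> a \<otimes> s) \<otimes> c) \<otimes> inv s"
      using c b by (simp add: centraliser_def)
    also have "\<dots> = a \<otimes> (s \<otimes> c \<otimes> inv s)"
      using sc cc ac by (simp add: m_assoc)
    finally show ?thesis .
  qed
  then show ?thesis
    using sc cc by (simp add: centraliser_def)
qed

lemma (in group) normalizer_subset_normalizer_centraliser:
  assumes A: "A \<subseteq> carrier G"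
  shows "normalizer G A \<subseteq> normalizer G (centraliser G A)"
proof
  fix s assume s: "s \<in> normalizer G A"
  then have sc: "s \<in> carrier G" and s': "inv s \<in> normalizer G A"
    using A normalizer_iff subgroup.m_inv_closed[OF normalizer_imp_subgroup[OF A]] by blast+
  have C: "centraliser G A \<subseteq> carrier G"
    by (auto simp: centraliser_def)
  show "s \<in> normalizer G (centraliser G A)"
    using conj_mem_centraliser[OF s A] conj_mem_centraliser[OF s' A] sc
    by (intro normalizerI[OF sc C]) simp_all
qed

lemma (in group) normal_restrictI:
  assumes C: "subgroup C G" and K: "subgroup K G" and KC: "K \<subseteq> C"
    and conj: "\<And>c a. c \<in> C \<Longrightarrow> a \<in> K \<Longrightarrow> c \<otimes> a \<otimes> inv c \<in> K"
  shows "K \<lhd> G\<lparr>carrier := C\<rparr>"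
proof -
  interpret C: group "G\<lparr>carrier := C\<rparr>"
    using C by (rule subgroup_imp_group)
  show ?thesis
    using subgroup_incl[OF K C KC] conj C m_inv_consistent by (auto simp: C.normal_inv_iff)
qed

lemma (in group) normal_restrictD:
  assumes C: "subgroup C G" and K: "K \<lhd> G\<lparr>carrier := C\<rparr>"
  shows "subgroup K G" "K \<subseteq> C" "c \<in> C \<Longrightarrow> a \<in> K \<Longrightarrow> c \<otimes> a \<otimes> inv c \<in> K"
proof -
  have K': "subgroup K (G\<lparr>carrier := C\<rparr>)"
    using K by (rule normal_imp_subgroup)
  show "subgroup K G"
    using incl_subgroup[OF C K'] .
  show "K \<subseteq> C"
    using subgroup.subset[OF K'] by simp
  show "c \<in> C \<Longrightarrow> a \<in> K \<Longrightarrow> c \<otimes> a \<otimes> inv c \<in> K"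
    using normal.inv_op_closed2[OF K, of c a] m_inv_consistent[OF C] by simp
qed

lemma (in group) conjg_mult:
  "a \<in> carrier G \<Longrightarrow> b \<in> carrier G \<Longrightarrow> s \<in> carrier G \<Longrightarrow>
    conjg G (a \<otimes> b) s = conjg G a s \<otimes> conjg G b s"
  by (simp add: conjg_def m_assoc)

lemma (in group) conjg_conjg_inv [simp]:
  "a \<in> carrier G \<Longrightarrow> s \<in> carrier G \<Longrightarrow> conjg G (conjg G a s) (inv s) = a"
  by (simp add: conjg_def m_assoc)

lemma (in group) subgroup_conjg_preimage:
  assumes s: "s \<in> carrier G" and K: "subgroup K G"
  shows "subgroup {a \<in> carrier G. conjg G a s \<in> K} G"
proof (rule subgroupI)
  show "{a \<in> carrier G. conjg G a s \<in> K} \<noteq> {}"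
    using s subgroup.one_closed[OF K] by (auto simp: conjg_def)
next
  fix a assume "a \<in> {a \<in> carrier G. conjg G a s \<in> K}"
  moreover have "a \<in> carrier G \<Longrightarrow> conjg G (inv a) s = inv (conjg G a s)"
    using s by (simp add: conjg_def m_assoc inv_mult_group)
  ultimately show "inv a \<in> {a \<in> carrier G. conjg G a s \<in> K}"
    using subgroup.m_inv_closed[OF K] by auto
next
  fix a b assume "a \<in> {a \<in> carrier G. conjg G a s \<in> K}" "b \<in> {a \<in> carrier G. conjg G a s \<in> K}"
  then show "a \<otimes> b \<in> {a \<in> carrier G. conjg G a s \<in> K}"
    using s subgroup.m_closed[OF K] by (auto simp: conjg_mult)
qed auto

lemma (in group) conjg_set_eq_image:
  "s \<in> carrier G \<Longrightarrow> inv s <# K #> s = (\<lambda>a. conjg G a s) ` K"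
  by (simp add: lr_coset_eq_image conjg_def)

lemma (in group) card_conjg_set:
  assumes "s \<in> carrier G" "K \<subseteq> carrier G"
  shows "card (inv s <# K #> s) = card K"
proof -
  have "inj_on (\<lambda>a. conjg G a s) K"
    using assms by (intro inj_on_inverseI[where g = "\<lambda>a. conjg G a (inv s)"]) auto
  then show ?thesis
    using assms by (simp add: conjg_set_eq_image card_image)
qed

lemma (in group) normal_conjg_set:
  assumes C: "subgroup C G" and K: "K \<lhd> G\<lparr>carrier := C\<rparr>" and s: "s \<in> normalizer G C"
  shows "inv s <# K #> s \<lhd> G\<lparr>carrier := C\<rparr>"
proof (rule normal_restrictI[OF C])
  have Cc: "C \<subseteq> carrier G" and sc: "s \<in> carrier G"
    using C s subgroup.subset normalizer_iff by blast+
  have KC: "K \<subseteq> C" and Kc: "K \<subseteq> carrier G"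
    using normal_restrictD(2)[OF C K] Cc by auto
  show "subgroup (inv s <# K #> s) G"
    using subgroup_conjugation_is_surj1[OF sc normal_restrictD(1)[OF C K]] .
  show "inv s <# K #> s \<subseteq> C"
    using conjg_mem_normalizer[OF s Cc] KC by (auto simp: conjg_set_eq_image[OF sc])
  fix c b assume c: "c \<in> C" and b: "b \<in> inv s <# K #> s"
  then obtain a where a: "a \<in> K" and b_eq: "b = conjg G a s"
    using sc by (auto simp: conjg_set_eq_image)
  define c' where "c' = s \<otimes> c \<otimes> inv s"
  have ac: "a \<in> carrier G" and cc: "c \<in> carrier G"
    using a c Kc Cc by auto
  have "c \<otimes> b \<otimes> inv c = conjg G (c' \<otimes> a \<otimes> inv c') s"
    using ac cc sc by (simp add: b_eq c'_def conjg_def m_assoc inv_mult_group)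
  moreover have "c' \<otimes> a \<otimes> inv c' \<in> K"
    using normal_restrictD(3)[OF C K _ a] conj_mem_normalizer[OF s Cc c] by (simp add: c'_def)
  ultimately show "c \<otimes> b \<otimes> inv c \<in> inv s <# K #> s"
    using sc by (auto simp: conjg_set_eq_image)
qed

lemma (in group) commr_closed [simp]:
  "a \<in> carrier G \<Longrightarrow> b \<in> carrier G \<Longrightarrow> commr G a b \<in> carrier G"
  by (simp add: commr_def)

lemma (in group) commr_swap:
  "a \<in> carrier G \<Longrightarrow> b \<in> carrier G \<Longrightarrow> commr G b a = inv (commr G a b)"
  by (simp add: commr_def inv_mult_group m_assoc)

lemma (in group) comm_mod_sym:
  assumes "x \<in> carrier G" "a \<in> carrier G" "b \<in> carrier G"
  shows "comm_mod G x a b \<longleftrightarrow> comm_mod G x b a"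
proof -
  have Q: "subgroup (generate G {x}) G"
    using assms by (intro generate_is_subgroup) auto
  show ?thesis
    unfolding comm_mod_def
    using commr_swap[of a b] commr_swap[of b a] subgroup.m_inv_closed[OF Q] assms by metis
qed

lemma (in group) comm_mod_if_commute:
  assumes "a \<in> carrier G" "b \<in> carrier G" "a \<otimes> b = b \<otimes> a"
  shows "comm_mod G x a b"
proof -
  have "commr G a b = inv a \<otimes> (inv b \<otimes> (b \<otimes> a))"
    using assms by (simp add: commr_def m_assoc)
  then have "commr G a b = \<one>"
    using assms by simp
  then show ?thesis
    by (simp add: comm_mod_def generate.one)
qed

lemma (in group) subgroup_comm_mod:
  assumes x: "x \<in> carrier G" and a: "a \<in> carrier G" and Z: "subgroup Z G"
    and Zx: "Z \<subseteq> centraliser G {x}"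
  shows "subgroup {z \<in> Z. comm_mod G x a z} G"
proof -
  define Q where "Q = generate G {x}"
  have Q: "subgroup Q G"
    unfolding Q_def using x by (intro generate_is_subgroup) auto
  have Zc: "Z \<subseteq> carrier G"
    using Z subgroup.subset by auto
  have ZQ: "z \<otimes> u = u \<otimes> z" if "z \<in> Z" "u \<in> Q" for z u
    using that Zx centraliser_generate[of "{x}"] x unfolding Q_def centraliser_def by auto
  show ?thesis
  proof (rule subgroupI)
    show "{z \<in> Z. comm_mod G x a z} \<subseteq> carrier G"
      using Zc by blast
    show "{z \<in> Z. comm_mod G x a z} \<noteq> {}"
      using a subgroup.one_closed[OF Z] comm_mod_if_commute[of a \<one>] by auto
  next
    fix z assume "z \<in> {z \<in> Z. comm_mod G x a z}"
    then have z: "z \<in> Z" and zc: "z \<in> carrier G" and u: "commr G a z \<in> Q"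
      using Zc by (auto simp: comm_mod_def Q_def)
    have "commr G a (inv z) = z \<otimes> inv (commr G a z) \<otimes> inv z"
      using a zc by (simp add: commr_def m_assoc inv_mult_group)
    also have "\<dots> = inv (commr G a z)"
      using ZQ[OF z subgroup.m_inv_closed[OF Q u]] zc a by (simp add: m_assoc)
    finally show "inv z \<in> {z \<in> Z. comm_mod G x a z}"
      using z u subgroup.m_inv_closed[OF Q] subgroup.m_inv_closed[OF Z]
      by (simp add: comm_mod_def Q_def)
  next
    fix z w assume "z \<in> {z \<in> Z. comm_mod G x a z}" "w \<in> {z \<in> Z. comm_mod G x a z}"
    then have z: "z \<in> Z" "commr G a z \<in> Q" and w: "w \<in> Z" "commr G a w \<in> Q"
      and zc: "z \<in> carrier G" and wc: "w \<in> carrier G"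
      using Zc by (auto simp: comm_mod_def Q_def)
    have "commr G a (z \<otimes> w) = (inv a \<otimes> inv w \<otimes> a) \<otimes> (commr G a z \<otimes> w)"
      using a zc wc by (simp add: commr_def m_assoc inv_mult_group)
    also have "\<dots> = (inv a \<otimes> inv w \<otimes> a) \<otimes> (w \<otimes> commr G a z)"
      using ZQ[OF w(1) z(2)] by simp
    also have "\<dots> = commr G a w \<otimes> commr G a z"
      using a zc wc by (simp add: commr_def m_assoc)
    finally show "z \<otimes> w \<in> {z \<in> Z. comm_mod G x a z}"
      using z w subgroup.m_closed[OF Q] subgroup.m_closed[OF Z]
      by (simp add: comm_mod_def Q_def)
  qed
qed

lemma (in group) card_set_mult_mult_card_Int:
  assumes H: "subgroup H G" and K: "subgroup K G" and fin: "finite H" "finite K"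
  shows "card (H <#> K) * card (H \<inter> K) = card H * card K"
proof -
  have Hc: "H \<subseteq> carrier G" and Kc: "K \<subseteq> carrier G"
    using H K subgroup.subset by auto
  define fibre where "fibre z = {(a, b) \<in> H \<times> K. a \<otimes> b = z}" for z
  have fibre_eq: "fibre (a0 \<otimes> b0) = (\<lambda>t. (a0 \<otimes> t, inv t \<otimes> b0)) ` (H \<inter> K)"
    if a0: "a0 \<in> H" and b0: "b0 \<in> K" for a0 b0
  proof (intro equalityI subsetI)
    fix ab assume "ab \<in> fibre (a0 \<otimes> b0)"
    then obtain a b where ab: "ab = (a, b)" "a \<in> H" "b \<in> K" and eq: "a \<otimes> b = a0 \<otimes> b0"
      unfolding fibre_def by blast
    have c: "a \<in> carrier G" "b \<in> carrier G" "a0 \<in> carrier G" "b0 \<in> carrier G"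
      using ab a0 b0 Hc Kc by auto
    have t: "inv a0 \<otimes> a = b0 \<otimes> inv b"
      using eq c by (metis inv_closed inv_solve_left' inv_solve_right m_assoc m_closed)
    have "inv a0 \<otimes> a \<in> H" "b0 \<otimes> inv b \<in> K"
      using ab a0 b0 subgroup.m_closed[OF H] subgroup.m_inv_closed[OF H]
        subgroup.m_closed[OF K] subgroup.m_inv_closed[OF K] by auto
    then have "inv a0 \<otimes> a \<in> H \<inter> K"
      using t by simp
    moreover have "inv (inv a0 \<otimes> a) \<otimes> b0 = b"
      unfolding t using c by (simp add: inv_mult_group m_assoc)
    then have "ab = (a0 \<otimes> (inv a0 \<otimes> a), inv (inv a0 \<otimes> a) \<otimes> b0)"
      using c ab by simp
    ultimately show "ab \<in> (\<lambda>t. (a0 \<otimes> t, inv t \<otimes> b0)) ` (H \<inter> K)"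
      by blast
  next
    fix ab assume "ab \<in> (\<lambda>t. (a0 \<otimes> t, inv t \<otimes> b0)) ` (H \<inter> K)"
    then obtain t where t: "t \<in> H" "t \<in> K" and ab: "ab = (a0 \<otimes> t, inv t \<otimes> b0)"
      by blast
    then show "ab \<in> fibre (a0 \<otimes> b0)"
      using a0 b0 Hc Kc subgroup.m_closed[OF H] subgroup.m_closed[OF K] subgroup.m_inv_closed[OF K]
      by (auto simp: fibre_def m_assoc subset_iff)
  qed
  have card_fibre: "card (fibre z) = card (H \<inter> K)" if z: "z \<in> H <#> K" for z
  proof -
    obtain a0 b0 where a0: "a0 \<in> H" and b0: "b0 \<in> K" and z: "z = a0 \<otimes> b0"
      using z unfolding set_mult_def by blast
    have "inj_on (\<lambda>t. (a0 \<otimes> t, inv t \<otimes> b0)) (H \<inter> K)"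
      using a0 Hc by (intro inj_onI) (auto simp: subset_iff)
    then show ?thesis
      using fibre_eq[OF a0 b0] z by (simp add: card_image)
  qed
  have fin_HK: "finite (H <#> K)"
    using fin by (simp add: set_mult_def)
  have "card H * card K = card (\<Union>z \<in> H <#> K. fibre z)"
    unfolding card_cartesian_product[symmetric] by (rule arg_cong[where f = card])
      (auto simp: fibre_def set_mult_def)
  also have "\<dots> = (\<Sum>z \<in> H <#> K. card (fibre z))"
  proof (rule card_UN_disjoint)
    show "\<forall>z \<in> H <#> K. finite (fibre z)"
      using fin unfolding fibre_def by (auto intro: finite_subset[of _ "H \<times> K"])
    show "\<forall>z \<in> H <#> K. \<forall>z' \<in> H <#> K. z \<noteq> z' \<longrightarrow> fibre z \<inter> fibre z' = {}"
      unfolding fibre_def by auto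
  qed (rule fin_HK)
  also have "\<dots> = card (H <#> K) * card (H \<inter> K)"
    using card_fibre by simp
  finally show ?thesis
    by simp
qed

lemma (in group) card_subgroup_dvd_card:
  assumes H: "subgroup H G" and K: "subgroup K G" and HK: "H \<subseteq> K"
  shows "card H dvd card K"
proof -
  interpret K: group "G\<lparr>carrier := K\<rparr>"
    using K by (rule subgroup_imp_group)
  have "card (rcosets\<^bsub>G\<lparr>carrier := K\<rparr>\<^esub> H) * card H = card K"
    using K.lagrange[OF subgroup_incl[OF H K HK]] by (simp add: order_def)
  then show ?thesis
    by (metis dvd_triv_right)
qed

lemma (in group) p_group_set_subgroup:
  assumes p: "Factorial_Ring.prime p" and H: "subgroup H G" and P: "subgroup P G"
    and HP: "H \<subseteq> P" and pP: "p_group_set p P"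
  shows "p_group_set p H"
proof -
  obtain n where "finite P" "card P = p ^ n"
    using pP by (auto simp: p_group_set_def)
  then show ?thesis
    using card_subgroup_dvd_card[OF H P HP] divides_primepow_nat[OF p] HP finite_subset
    by (auto simp: p_group_set_def)
qed

lemma (in group) p_mult_card_le_card:
  assumes p: "Factorial_Ring.prime p" and H: "subgroup H G" and K: "subgroup K G"
    and HK: "H \<subset> K" and pK: "p_group_set p K"
  shows "p * card H \<le> card K"
proof -
  obtain n where fin: "finite K" and n: "card K = p ^ n"
    using pK by (auto simp: p_group_set_def)
  obtain i where i: "card H = p ^ i"
    using p_group_set_subgroup[OF p H K _ pK] HK by (auto simp: p_group_set_def)
  have p1: "1 < p"
    using p prime_gt_1_nat by blast
  have "card H < card K"
    using psubset_card_mono[OF fin HK] .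
  then have "i < n"
    using i n p1 power_less_imp_less_exp by metis
  then have "p ^ Suc i \<le> p ^ n"
    using p1 by (intro power_increasing) auto
  then show ?thesis
    using i n by simp
qed

lemma (in group) p_group_set_mult:
  assumes p: "Factorial_Ring.prime p" and C: "subgroup C G"
    and H: "H \<lhd> G\<lparr>carrier := C\<rparr>" and K: "K \<lhd> G\<lparr>carrier := C\<rparr>"
    and pH: "p_group_set p H" and pK: "p_group_set p K"
  shows "H <#> K \<lhd> G\<lparr>carrier := C\<rparr>" "p_group_set p (H <#> K)"
proof -
  interpret C: group "G\<lparr>carrier := C\<rparr>"
    using C by (rule subgroup_imp_group)
  show HK: "H <#> K \<lhd> G\<lparr>carrier := C\<rparr>"
    using C.normal_subgroup_set_mult_closed[OF H K] by simp
  obtain a b where fin: "finite H" "finite K" and ab: "card H = p ^ a" "card K = p ^ b"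
    using pH pK by (auto simp: p_group_set_def)
  have "card (H <#> K) * card (H \<inter> K) = p ^ (a + b)"
    using card_set_mult_mult_card_Int[OF normal_restrictD(1)[OF C H] normal_restrictD(1)[OF C K] fin]
    by (simp add: ab power_add)
  then have "card (H <#> K) dvd p ^ (a + b)"
    by (metis dvd_triv_left)
  moreover have "finite (H <#> K)"
    using fin by (simp add: set_mult_def finite_image_set2)
  ultimately show "p_group_set p (H <#> K)"
    using divides_primepow_nat[OF p] by (auto simp: p_group_set_def)
qed

lemma (in group) p_mult_card_generate_le:
  assumes p: "Factorial_Ring.prime p" and P: "subgroup P G" and pP: "p_group_set p P"
    and aA: "insert a A \<subseteq> P" and a: "a \<notin> generate G A"
  shows "p * card (generate G A) \<le> card (generate G (insert a A))"
proof -
  have Pc: "P \<subseteq> carrier G"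
    using P subgroup.subset by blast
  have sub: "subgroup (generate G A) G" "subgroup (generate G (insert a A)) G"
    using aA Pc by (auto intro!: generate_is_subgroup)
  have "generate G A \<subset> generate G (insert a A)"
    using mono_generate[of A "insert a A"] a generate.incl[of a "insert a A"] by blast
  moreover have "p_group_set p (generate G (insert a A))"
    using p_group_set_subgroup[OF p sub(2) P generate_subgroup_incl[OF aA P] pP] .
  ultimately show ?thesis
    using p_mult_card_le_card[OF p sub] by blast
qed

lemma (in group) p_power_card_le_card_generate:
  fixes e :: "'i::linorder \<Rightarrow> 'a"
  assumes p: "Factorial_Ring.prime p" and P: "subgroup P G" and pP: "p_group_set p P"
    and eP: "e ` I \<subseteq> P"
    and indep: "\<And>i. i \<in> I \<Longrightarrow> e i \<notin> generate G (e ` {j \<in> I. j < i})"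
    and J: "finite J" "J \<subseteq> I"
  shows "inj_on e J \<and> p ^ card J \<le> card (generate G (e ` J))"
  using J
proof (induction J rule: finite_linorder_max_induct)
  case empty
  then show ?case
    by (simp add: generate_empty)
next
  case (insert b A)
  have "generate G (e ` A) \<subseteq> generate G (e ` {j \<in> I. j < b})"
    using insert by (intro mono_generate) auto
  then have b: "e b \<notin> generate G (e ` A)"
    using indep[of b] insert by blast
  then have "e b \<notin> e ` A" "b \<notin> A"
    using generate.incl[of _ "e ` A"] insert by auto
  moreover have "p * card (generate G (e ` A)) \<le> card (generate G (e ` insert b A))"
    using p_mult_card_generate_le[OF p P pP _ b] eP insert by auto
  moreover have "inj_on e A \<and> p ^ card A \<le> card (generate G (e ` A))"
    using insert.IH insert.prems by blast
  ultimately show ?case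
    using insert.hyps by (auto intro: order_trans[OF mult_le_mono2])
qed

text \<open>Only the hypotheses of the theorem that the proof uses: G need not be finite, l need not
  centralise x, and of the order conditions only x \<noteq> \<one> is needed.\<close>

locale comm_mod_configuration = group G for G (structure) +
  fixes p k :: nat and x y l \<sigma> :: 'a and g h :: "nat \<Rightarrow> 'a" and N :: "'a set"
  assumes prime_p: "Factorial_Ring.prime p"
    and x_carrier: "x \<in> carrier G" and x_ne_one: "x \<noteq> \<one>"
    and N_normal: "N \<lhd> G\<lparr>carrier := normalizer G (generate G {x})\<rparr>"
    and card_N: "card N = p ^ (2 * k + 3)"
    and x_N: "x \<in> N"
    and y_in: "y \<in> N \<inter> centraliser G {x}"
    and l_N: "l \<in> N"
    and g_in: "\<And>i. i \<in> {1..k} \<Longrightarrow> g i \<in> N \<inter> centraliser G {x}"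
    and h_in: "\<And>i. i \<in> {1..k} \<Longrightarrow> h i \<in> N \<inter> centraliser G {x}"
    and \<sigma>_normalizer: "\<sigma> \<in> normalizer G (generate G {x, y})"
    and y_notin: "y \<notin> generate G {x}"
    and g_y: "\<And>i. i \<in> {1..k} \<Longrightarrow> g i \<otimes> y = y \<otimes> g i"
    and h_y: "\<And>i. i \<in> {1..k} \<Longrightarrow> h i \<otimes> y = y \<otimes> h i"
    and l_y: "l \<otimes> y \<noteq> y \<otimes> l"
    and g_g: "\<And>i j. i \<in> {1..k} \<Longrightarrow> j \<in> {1..k} \<Longrightarrow> comm_mod G x (g j) (g i)"
    and g_g\<sigma>: "\<And>i j. i \<in> {1..k} \<Longrightarrow> j \<in> {1..k} \<Longrightarrow> comm_mod G x (g j) (conjg G (g i) \<sigma>)"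
    and g_h: "\<And>i j. i \<in> {1..k} \<Longrightarrow> j \<in> {1..k} \<Longrightarrow> comm_mod G x (g j) (h i)"
    and g_h\<sigma>: "\<And>i j. i \<in> {1..k} \<Longrightarrow> j \<in> {1..k} \<Longrightarrow> i < j \<Longrightarrow>
      comm_mod G x (g j) (conjg G (h i) \<sigma>)"
    and not_g_h\<sigma>: "\<And>i. i \<in> {1..k} \<Longrightarrow> \<not> comm_mod G x (g i) (conjg G (h i) \<sigma>)"
begin

abbreviation Cxy :: "'a set" where "Cxy \<equiv> centraliser G (generate G {x, y})"
abbreviation M :: "'a set" where "M \<equiv> N \<inter> Cxy"
abbreviation M\<sigma> :: "'a set" where "M\<sigma> \<equiv> inv \<sigma> <# M #> \<sigma>"
abbreviation P :: "'a set" where "P \<equiv> M <#> M\<sigma>"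
abbreviation h\<sigma> :: "nat \<Rightarrow> 'a" where "h\<sigma> i \<equiv> conjg G (h i) \<sigma>"

lemma normalizer_x_subgroup: "subgroup (normalizer G (generate G {x})) G"
  using x_carrier by (intro normalizer_imp_subgroup generate_incl) auto

lemma N_subgroup: "subgroup N G"
  using normal_restrictD(1)[OF normalizer_x_subgroup N_normal] .

lemma N_carrier: "N \<subseteq> carrier G"
  using N_subgroup subgroup.subset by blast

lemma finite_N: "finite N"
proof -
  have "0 < card N"
    using card_N prime_gt_0_nat[OF prime_p] by simp
  then show ?thesis
    by (rule card_ge_0_finite)
qed

lemma xy_carrier: "{x, y} \<subseteq> carrier G"
  using x_carrier y_in N_carrier by blast

lemma generate_xy_carrier: "generate G {x, y} \<subseteq> carrier G"
  using generate_incl[OF xy_carrier] .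

lemma g_carrier: "i \<in> {1..k} \<Longrightarrow> g i \<in> carrier G"
  using g_in N_carrier by blast

lemma h_carrier: "i \<in> {1..k} \<Longrightarrow> h i \<in> carrier G"
  using h_in N_carrier by blast

lemma \<sigma>_carrier: "\<sigma> \<in> carrier G"
  using \<sigma>_normalizer normalizer_iff[OF generate_xy_carrier] by blast

lemma mem_Cxy_iff: "c \<in> Cxy \<longleftrightarrow> c \<in> carrier G \<and> c \<otimes> x = x \<otimes> c \<and> c \<otimes> y = y \<otimes> c"
  unfolding centraliser_generate[OF xy_carrier] by (auto simp: centraliser_def)

lemma Cxy_subgroup: "subgroup Cxy G"
  using centraliser_subgroup[OF generate_xy_carrier] .

lemma Cxy_carrier: "Cxy \<subseteq> carrier G"
  by (auto simp: centraliser_def)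

lemma Cxy_centralises_x: "Cxy \<subseteq> centraliser G {x}"
  unfolding centraliser_generate[OF xy_carrier] by (auto simp: centraliser_def)

lemma x_Cxy: "x \<in> Cxy" and y_Cxy: "y \<in> Cxy"
  unfolding mem_Cxy_iff using x_carrier y_in by (auto simp: centraliser_def)

lemma g_Cxy: "i \<in> {1..k} \<Longrightarrow> g i \<in> Cxy"
  unfolding mem_Cxy_iff using g_in g_y by (auto simp: centraliser_def)

lemma h_Cxy: "i \<in> {1..k} \<Longrightarrow> h i \<in> Cxy"
  unfolding mem_Cxy_iff using h_in h_y by (auto simp: centraliser_def)

lemma l_notin_Cxy: "l \<notin> Cxy"
  unfolding mem_Cxy_iff using l_y by auto

lemma \<sigma>_normalizes_Cxy: "\<sigma> \<in> normalizer G Cxy"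
  using \<sigma>_normalizer normalizer_subset_normalizer_centraliser[OF generate_xy_carrier] by blast

lemma conjg_\<sigma>_Cxy: "c \<in> Cxy \<Longrightarrow> conjg G c \<sigma> \<in> Cxy"
  using conjg_mem_normalizer[OF \<sigma>_normalizes_Cxy Cxy_carrier] .

lemma xy_generate_xy: "x \<in> generate G {x, y}" "y \<in> generate G {x, y}"
  by (auto intro: generate.incl)

lemma conjg_\<sigma>_generate_xy: "a \<in> generate G {x, y} \<Longrightarrow> conjg G a \<sigma> \<in> generate G {x, y}"
  using conjg_mem_normalizer[OF \<sigma>_normalizer generate_xy_carrier] .

lemma comm_mod_Cxy: "c \<in> Cxy \<Longrightarrow> a \<in> generate G {x, y} \<Longrightarrow> comm_mod G x c a"
  using Cxy_carrier generate_xy_carrier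
  by (intro comm_mod_if_commute) (auto simp: centraliser_def)

lemma Cxy_subset_normalizer_x: "Cxy \<subseteq> normalizer G (generate G {x})"
proof -
  have "Cxy \<subseteq> centraliser G (generate G {x})"
    using Cxy_centralises_x centraliser_generate[of "{x}"] x_carrier by auto
  also have "\<dots> \<subseteq> normalizer G (generate G {x})"
    using x_carrier by (intro centraliser_subset_normalizer generate_incl) auto
  finally show ?thesis .
qed

lemma M_subgroup: "subgroup M G"
  using subgroup_Int[OF N_subgroup Cxy_subgroup] .

lemma finite_M: "finite M"
  using finite_N by blast

lemma M_normal: "M \<lhd> G\<lparr>carrier := Cxy\<rparr>"
proof (rule normal_restrictI[OF Cxy_subgroup M_subgroup])
  fix c a assume c: "c \<in> Cxy" and a: "a \<in> M"
  have "c \<otimes> a \<otimes> inv c \<in> N"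
    using normal_restrictD(3)[OF normalizer_x_subgroup N_normal] c a Cxy_subset_normalizer_x by blast
  moreover have "c \<otimes> a \<otimes> inv c \<in> Cxy"
    using c a subgroup.m_closed[OF Cxy_subgroup] subgroup.m_inv_closed[OF Cxy_subgroup] by blast
  ultimately show "c \<otimes> a \<otimes> inv c \<in> M"
    by blast
qed blast

lemma N_p_group: "p_group_set p N"
  using finite_N card_N by (auto simp: p_group_set_def)

lemma M_p_group: "p_group_set p M"
  using p_group_set_subgroup[OF prime_p M_subgroup N_subgroup _ N_p_group] by blast

lemma M\<sigma>_normal: "M\<sigma> \<lhd> G\<lparr>carrier := Cxy\<rparr>"
  using normal_conjg_set[OF Cxy_subgroup M_normal \<sigma>_normalizes_Cxy] .

lemma M\<sigma>_p_group: "p_group_set p M\<sigma>"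
proof -
  have "card M\<sigma> = card M"
    using card_conjg_set[OF \<sigma>_carrier] N_carrier by blast
  moreover have "finite M\<sigma>"
    using finite_N by (simp add: conjg_set_eq_image[OF \<sigma>_carrier])
  ultimately show ?thesis
    using M_p_group by (simp add: p_group_set_def)
qed

lemma P_normal: "P \<lhd> G\<lparr>carrier := Cxy\<rparr>"
  and P_p_group: "p_group_set p P"
  using p_group_set_mult[OF prime_p Cxy_subgroup M_normal M\<sigma>_normal M_p_group M\<sigma>_p_group] by auto

lemma P_subgroup: "subgroup P G"
  using normal_restrictD(1)[OF Cxy_subgroup P_normal] .

lemma P_carrier: "P \<subseteq> carrier G"
  using subgroup.subset[OF P_subgroup] .

lemma M_subset_P: "M \<subseteq> P"
  and M\<sigma>_subset_P: "M\<sigma> \<subseteq> P"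
proof -
  have "\<one> \<in> M" "\<one> \<in> M\<sigma>"
    using subgroup.one_closed[OF normal_restrictD(1)[OF Cxy_subgroup M_normal]]
      subgroup.one_closed[OF normal_restrictD(1)[OF Cxy_subgroup M\<sigma>_normal]] by blast+
  moreover have "M\<sigma> \<subseteq> carrier G"
    using normal_restrictD(2)[OF Cxy_subgroup M\<sigma>_normal] Cxy_carrier by blast
  ultimately show "M \<subseteq> P" "M\<sigma> \<subseteq> P"
    using N_carrier unfolding set_mult_def by force+
qed

lemma xygh_subset_M: "{x, y} \<union> g ` {1..k} \<union> h ` {1..k} \<subseteq> M"
  using x_N y_in g_in h_in x_Cxy y_Cxy g_Cxy h_Cxy by blast

lemma h\<sigma>_Cxy: "i \<in> {1..k} \<Longrightarrow> h\<sigma> i \<in> Cxy"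
  using conjg_\<sigma>_Cxy[OF h_Cxy] .

lemma conjg_\<sigma>_M: "m \<in> M \<Longrightarrow> conjg G m \<sigma> \<in> M\<sigma>"
  by (simp add: conjg_set_eq_image[OF \<sigma>_carrier])

text \<open>In the lexicographic order the indices list x, y, g_k, \<dots>, g_1, h_1, \<dots>, h_k,
  h_1^\<sigma>, \<dots>, h_k^\<sigma>.\<close>

definition generator :: "nat \<times> nat \<Rightarrow> 'a" where
  "generator = (\<lambda>(a, i). if a = 0 then x else if a = 1 then y else if a = 2 then g (k - i)
     else if a = 3 then h i else h\<sigma> i)"

definition generator_index :: "(nat \<times> nat) set" where
  "generator_index = {(0, 0), (1, 0)} \<union> (\<lambda>j. (2, k - j)) ` {1..k} \<union> Pair 3 ` {1..k} \<union> Pair 4 ` {1..k}"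

lemma generator_g: "j \<le> k \<Longrightarrow> generator (2, k - j) = g j" and generator_h: "generator (3, j) = h j"
  and generator_h\<sigma>: "generator (4, j) = h\<sigma> j"
  by (simp_all add: generator_def)

lemma generator_index_cases [consumes 1, case_names x y g h h\<sigma>]:
  assumes "i \<in> generator_index"
  obtains "i = (0, 0)" | "i = (1, 0)" | j where "j \<in> {1..k}" "i = (2, k - j)"
    | j where "j \<in> {1..k}" "i = (3, j)" | j where "j \<in> {1..k}" "i = (4, j)"
  using assms unfolding generator_index_def by blast

lemma finite_generator_index: "finite generator_index"
  by (simp add: generator_index_def)

lemma generator_image: "generator ` generator_index = {x, y} \<union> g ` {1..k} \<union> h ` {1..k} \<union> h\<sigma> ` {1..k}"
proof -
  have "generator ` (\<lambda>j. (2, k - j)) ` {1..k} = g ` {1..k}"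
    unfolding image_image by (rule image_cong) (auto simp: generator_g)
  then show ?thesis
    unfolding generator_index_def by (simp add: image_Un image_image generator_def)
qed

lemma generator_subset_P: "generator ` generator_index \<subseteq> P"
  using M_subset_P M\<sigma>_subset_P conjg_\<sigma>_M x_N y_in g_in h_in x_Cxy y_Cxy g_Cxy h_Cxy
  unfolding generator_image by blast

lemma g_notin_generate_predecessors:
  assumes j: "j \<in> {1..k}"
  shows "g j \<notin> generate G (generator ` {i \<in> generator_index. i < (2, k - j)})"
proof -
  let ?K = "{z \<in> Cxy. comm_mod G x (h\<sigma> j) z}"
  have K: "subgroup ?K G"
    using subgroup_comm_mod[OF x_carrier _ Cxy_subgroup Cxy_centralises_x] h\<sigma>_Cxy[OF j] Cxy_carrier
    by blast
  have "generator i \<in> ?K" if "i \<in> generator_index" "i < (2, k - j)" for i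
    using that(1)
  proof (cases rule: generator_index_cases)
    case (g j')
    then have "j < j'"
      using that(2) j by auto
    then have "comm_mod G x (g j') (h\<sigma> j)"
      using g_h\<sigma> j g by blast
    then show ?thesis
      using g g_Cxy[of j'] h\<sigma>_Cxy[OF j] Cxy_carrier comm_mod_sym[OF x_carrier] generator_g
      by (auto simp: subset_iff)
  qed (use that(2) h\<sigma>_Cxy[OF j] comm_mod_Cxy x_Cxy y_Cxy xy_generate_xy in \<open>auto simp: generator_def\<close>)
  then have "generate G (generator ` {i \<in> generator_index. i < (2, k - j)}) \<subseteq> ?K"
    by (intro generate_subgroup_incl[OF _ K]) auto
  moreover have "g j \<notin> ?K"
    using not_g_h\<sigma>[OF j] comm_mod_sym[OF x_carrier g_carrier[OF j]] h\<sigma>_Cxy[OF j] Cxy_carrier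
    by auto
  ultimately show ?thesis
    by blast
qed

lemma h_notin_generate_predecessors:
  assumes j: "j \<in> {1..k}"
  shows "h j \<notin> generate G (generator ` {i \<in> generator_index. i < (3, j)})"
proof -
  let ?K = "{z \<in> Cxy. comm_mod G x (g j) (conjg G z \<sigma>)}"
  have K_eq: "?K = Cxy \<inter> {z \<in> carrier G. conjg G z \<sigma> \<in> {w \<in> Cxy. comm_mod G x (g j) w}}"
    using conjg_\<sigma>_Cxy Cxy_carrier by auto
  have "subgroup {w \<in> Cxy. comm_mod G x (g j) w} G"
    using subgroup_comm_mod[OF x_carrier g_carrier[OF j] Cxy_subgroup Cxy_centralises_x] .
  then have K: "subgroup ?K G"
    unfolding K_eq by (intro subgroup_Int[OF Cxy_subgroup] subgroup_conjg_preimage[OF \<sigma>_carrier])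
  have "generator i \<in> ?K" if "i \<in> generator_index" "i < (3, j)" for i
    using that(1)
  proof (cases rule: generator_index_cases)
    case x
    then show ?thesis
      using x_Cxy g_Cxy[OF j] comm_mod_Cxy conjg_\<sigma>_generate_xy xy_generate_xy by (auto simp: generator_def)
  next
    case y
    then show ?thesis
      using y_Cxy g_Cxy[OF j] comm_mod_Cxy conjg_\<sigma>_generate_xy xy_generate_xy by (auto simp: generator_def)
  next
    case (g j')
    then show ?thesis
      using g_g\<sigma>[of j' j] j g_Cxy generator_g by auto
  next
    case (h j')
    then show ?thesis
      using that(2) g_h\<sigma>[of j' j] j h_Cxy generator_h by auto
  qed (use that(2) in auto)
  then have "generate G (generator ` {i \<in> generator_index. i < (3, j)}) \<subseteq> ?K"
    by (intro generate_subgroup_incl[OF _ K]) auto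
  moreover have "h j \<notin> ?K"
    using not_g_h\<sigma>[OF j] by auto
  ultimately show ?thesis
    by blast
qed

lemma h\<sigma>_notin_generate_predecessors:
  assumes j: "j \<in> {1..k}"
  shows "h\<sigma> j \<notin> generate G (generator ` {i \<in> generator_index. i < (4, j)})"
proof -
  let ?K = "{z \<in> Cxy. comm_mod G x (g j) z}"
  have K: "subgroup ?K G"
    using subgroup_comm_mod[OF x_carrier g_carrier[OF j] Cxy_subgroup Cxy_centralises_x] .
  have "generator i \<in> ?K" if "i \<in> generator_index" "i < (4, j)" for i
    using that(1)
  proof (cases rule: generator_index_cases)
    case (g j')
    then show ?thesis
      using g_g[of j' j] j g_Cxy generator_g by auto
  next
    case (h j')
    then show ?thesis
      using g_h[of j' j] j h_Cxy generator_h by auto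
  next
    case (h\<sigma> j')
    then show ?thesis
      using that(2) g_h\<sigma>[of j' j] j h\<sigma>_Cxy generator_h\<sigma> by auto
  qed (use g_Cxy[OF j] comm_mod_Cxy x_Cxy y_Cxy xy_generate_xy in \<open>auto simp: generator_def\<close>)
  then have "generate G (generator ` {i \<in> generator_index. i < (4, j)}) \<subseteq> ?K"
    by (intro generate_subgroup_incl[OF _ K]) auto
  moreover have "h\<sigma> j \<notin> ?K"
    using not_g_h\<sigma>[OF j] by auto
  ultimately show ?thesis
    by blast
qed

lemma generator_notin_generate_predecessors:
  assumes "i \<in> generator_index"
  shows "generator i \<notin> generate G (generator ` {j \<in> generator_index. j < i})"
  using assms
proof (cases rule: generator_index_cases)
  case x
  have no_predecessor: "{j \<in> generator_index. j < (0, 0)} = {}"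
    by (auto simp: less_prod_def')
  show ?thesis
    unfolding x no_predecessor using x_ne_one by (simp add: generator_def generate_empty)
next
  case y
  then have "{j \<in> generator_index. j < i} = {(0, 0)}"
    by (auto simp: generator_index_def)
  then show ?thesis
    using y y_notin by (simp add: generator_def)
qed (use g_notin_generate_predecessors h_notin_generate_predecessors
        h\<sigma>_notin_generate_predecessors generator_g generator_h generator_h\<sigma> in auto)

lemma inj_on_generator_card_generate:
  assumes "J \<subseteq> generator_index"
  shows "inj_on generator J \<and> p ^ card J \<le> card (generate G (generator ` J))"
  using p_power_card_le_card_generate[OF prime_p P_subgroup P_p_group generator_subset_P
      generator_notin_generate_predecessors] assms finite_subset[OF assms finite_generator_index] by blast

theorem p_group_generate_card_ge:
  assumes S: "S \<subseteq> {x, y} \<union> g ` {1..k} \<union> h ` {1..k} \<union> h\<sigma> ` {1..k}"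
  shows "p_group_set p (generate G S) \<and> p ^ card S \<le> card (generate G S)"
proof -
  define J where "J = {i \<in> generator_index. generator i \<in> S}"
  have S_eq: "S = generator ` J"
    using S unfolding J_def generator_image[symmetric] by blast
  have "inj_on generator J" "p ^ card J \<le> card (generate G (generator ` J))"
    using inj_on_generator_card_generate[of J] unfolding J_def by auto
  then have card_ge: "p ^ card S \<le> card (generate G S)"
    unfolding S_eq by (simp add: card_image)
  have SP: "S \<subseteq> P"
    using S generator_subset_P unfolding generator_image by blast
  have "p_group_set p (generate G S)"
    using p_group_set_subgroup[OF prime_p _ P_subgroup _ P_p_group] generate_is_subgroup
      generate_subgroup_incl[OF SP P_subgroup] P_carrier SP by blast
  with card_ge show ?thesis
    by blast
qed

lemma card_generate_xygh: "p ^ (2 * k + 2) \<le> card (generate G ({x, y} \<union> g ` {1..k} \<union> h ` {1..k}))"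
proof -
  define J :: "(nat \<times> nat) set"
    where "J = {(0, 0), (1, 0)} \<union> (\<lambda>j. (2, k - j)) ` {1..k} \<union> Pair 3 ` {1..k}"
  have J: "J \<subseteq> generator_index"
    unfolding J_def generator_index_def by blast
  have g_part: "generator ` (\<lambda>j. (2, k - j)) ` {1..k} = g ` {1..k}"
    unfolding image_image by (rule image_cong) (auto simp: generator_g)
  have "generator ` J = {x, y} \<union> g ` {1..k} \<union> h ` {1..k}"
    unfolding J_def image_Un g_part by (simp add: image_image generator_def)
  moreover have "card J = 2 * k + 2"
  proof -
    have "card ((\<lambda>j. (2::nat, k - j)) ` {1..k}) = k"
      by (subst card_image) (auto simp: inj_on_def)
    moreover have "card (Pair (3::nat) ` {1..k}) = k"
      by (subst card_image) (auto simp: inj_on_def)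
    moreover have "card ({(0::nat, 0::nat), (1, 0)} \<union> (\<lambda>j. (2, k - j)) ` {1..k})
        = 2 + card ((\<lambda>j. (2::nat, k - j)) ` {1..k})"
      by (subst card_Un_disjoint) auto
    ultimately show ?thesis
      unfolding J_def by (subst card_Un_disjoint) auto
  qed
  ultimately show ?thesis
    using inj_on_generator_card_generate[OF J] by simp
qed

lemma card_M: "card M = p ^ (2 * k + 2)"
proof -
  have p1: "1 < p"
    using prime_gt_1_nat[OF prime_p] .
  obtain b where b: "card M = p ^ b"
    using M_p_group by (auto simp: p_group_set_def)
  have "card (generate G ({x, y} \<union> g ` {1..k} \<union> h ` {1..k})) \<le> card M"
    using card_mono[OF finite_M generate_subgroup_incl[OF xygh_subset_M M_subgroup]] .
  then have "p ^ (2 * k + 2) \<le> p ^ b"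
    using card_generate_xygh b by linarith
  then have lower: "2 * k + 2 \<le> b"
    using power_le_imp_le_exp[OF p1] by blast
  have "M \<subset> N"
    using l_N l_notin_Cxy by blast
  then have "card M < card N"
    by (rule psubset_card_mono[OF finite_N])
  then have "p ^ b < p ^ (2 * k + 3)"
    using b card_N by simp
  then have upper: "b < 2 * k + 3"
    using power_less_imp_less_exp[OF p1] by blast
  have "b = 2 * k + 2"
    using lower upper by linarith
  then show ?thesis
    using b by simp
qed

lemma M_eq_generate: "M = generate G ({x, y} \<union> g ` {1..k} \<union> h ` {1..k})"
proof (rule sym, rule card_seteq)
  show "finite M"
    by (rule finite_M)
  show "generate G ({x, y} \<union> g ` {1..k} \<union> h ` {1..k}) \<subseteq> M"
    using generate_subgroup_incl[OF xygh_subset_M M_subgroup] .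
  show "card M \<le> card (generate G ({x, y} \<union> g ` {1..k} \<union> h ` {1..k}))"
    using card_generate_xygh card_M by simp
qed

theorem N_eq_generate: "N = generate G ({x, y, l} \<union> g ` {1..k} \<union> h ` {1..k})"
proof -
  define T where "T = {x, y, l} \<union> g ` {1..k} \<union> h ` {1..k}"
  have TN: "T \<subseteq> N"
    unfolding T_def using x_N y_in l_N g_in h_in by blast
  have sub: "subgroup (generate G T) G" and generate_T_N: "generate G T \<subseteq> N"
    using generate_is_subgroup[OF subset_trans[OF TN N_carrier]] generate_subgroup_incl[OF TN N_subgroup] .
  have "M \<subseteq> generate G T"
    unfolding M_eq_generate T_def by (intro mono_generate) blast
  moreover have "l \<in> generate G T" "l \<notin> M"
    using l_notin_Cxy unfolding T_def by (auto intro: generate.incl)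
  ultimately have "p * card M \<le> card (generate G T)"
    using p_mult_card_le_card[OF prime_p M_subgroup sub]
      p_group_set_subgroup[OF prime_p sub N_subgroup generate_T_N N_p_group] by blast
  moreover have "card N = p * card M"
  proof -
    have "2 * k + 3 = Suc (2 * k + 2)"
      by simp
    then show ?thesis
      unfolding card_N card_M by (simp only: power_Suc)
  qed
  ultimately have "card N \<le> card (generate G T)"
    by simp
  then show ?thesis
    unfolding T_def[symmetric] using card_seteq[OF finite_N generate_T_N] by simp
qed

theorem generate_eq_P:
  "generate G ({x, y} \<union> g ` {1..k} \<union> h ` {1..k} \<union> (\<lambda>i. conjg G (g i) \<sigma>) ` {1..k} \<union> h\<sigma> ` {1..k})
    = P"
    (is "generate G ?T = _")
proof -
  define H where "H = generate G ?T"
  have "(\<lambda>i. conjg G (g i) \<sigma>) ` {1..k} \<union> h\<sigma> ` {1..k} \<subseteq> M\<sigma>"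
    using conjg_\<sigma>_M g_in g_Cxy h_in h_Cxy by auto
  then have TP: "?T \<subseteq> P"
    using xygh_subset_M M_subset_P M\<sigma>_subset_P by blast
  have H: "subgroup H G"
    unfolding H_def using generate_is_subgroup TP P_carrier by blast
  have HP: "H \<subseteq> P"
    unfolding H_def by (rule generate_subgroup_incl[OF TP P_subgroup])
  have TH: "?T \<subseteq> H"
    unfolding H_def by (rule subsetI) (rule generate.incl)
  have M_H: "M \<subseteq> H"
    unfolding M_eq_generate H_def by (intro mono_generate) blast
  have "generate G {x, y} \<subseteq> H"
    unfolding H_def by (intro mono_generate) blast
  then have "conjg G x \<sigma> \<in> H" "conjg G y \<sigma> \<in> H"
    using conjg_\<sigma>_generate_xy xy_generate_xy by blast+
  moreover have "conjg G (g i) \<sigma> \<in> H" "conjg G (h i) \<sigma> \<in> H" if "i \<in> {1..k}" for i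
    using TH that by blast+
  ultimately have "{x, y} \<union> g ` {1..k} \<union> h ` {1..k} \<subseteq> {z \<in> carrier G. conjg G z \<sigma> \<in> H}"
    using xy_carrier g_carrier h_carrier by auto
  then have "M \<subseteq> {z \<in> carrier G. conjg G z \<sigma> \<in> H}"
    unfolding M_eq_generate by (rule generate_subgroup_incl[OF _ subgroup_conjg_preimage[OF \<sigma>_carrier H]])
  then have "M\<sigma> \<subseteq> H"
    by (auto simp: conjg_set_eq_image[OF \<sigma>_carrier])
  then have "P \<subseteq> H"
    using M_H mono_set_mult[of M H M\<sigma> H G] subgroup_mult_id[OF H] by blast
  with HP show ?thesis
    unfolding H_def by blast
qed

end

theorem lemma2p2:
  fixes G (structure)
    and p k :: nat
    and x y l \<sigma> :: 'a
    and g h :: "nat \<Rightarrow> 'a"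
    and N :: "'a set"
  assumes grp: "group G"
    and fin: "finite (carrier G)"
    and p_prime: "Factorial_Ring.prime p"
    and x_in: "x \<in> carrier G"
    and x_ord: "group.ord G x = p"
    and N_normal: "N \<lhd> (G\<lparr>carrier := normalizer G (generate G {x})\<rparr>)"
    and N_card: "card N = p ^ (2 * k + 3)"
    and x_N: "x \<in> N"
    and y_in: "y \<in> N \<inter> centraliser G {x}" and y_ord: "group.ord G y = p"
    and l_in: "l \<in> N \<inter> centraliser G {x}" and l_ord: "group.ord G l = p"
    and g_in: "\<And>i. i \<in> {1..k} \<Longrightarrow> g i \<in> N \<inter> centraliser G {x}"
    and g_ord: "\<And>i. i \<in> {1..k} \<Longrightarrow> group.ord G (g i) = p"
    and h_in: "\<And>i. i \<in> {1..k} \<Longrightarrow> h i \<in> N \<inter> centraliser G {x}"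
    and h_ord: "\<And>i. i \<in> {1..k} \<Longrightarrow> group.ord G (h i) = p"
    and \<sigma>_in: "\<sigma> \<in> normalizer G (generate G {x, y})"
    and i: "y \<notin> generate G {x}"
    and ii_g: "\<And>i. i \<in> {1..k} \<Longrightarrow> g i \<otimes> y = y \<otimes> g i"
    and ii_h: "\<And>i. i \<in> {1..k} \<Longrightarrow> h i \<otimes> y = y \<otimes> h i"
    and ii_l: "l \<otimes> y \<noteq> y \<otimes> l"
    and iii: "\<And>i j. i \<in> {1..k} \<Longrightarrow> j \<in> {1..k} \<Longrightarrow>
                 comm_mod G x (g j) (g i) \<and> comm_mod G x (g j) (conjg G (g i) \<sigma>)
                 \<and> comm_mod G x (g j) (h i)"
    and iv1: "\<And>i j. i \<in> {1..k} \<Longrightarrow> j \<in> {1..k} \<Longrightarrow> i < j \<Longrightarrow>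
                 comm_mod G x (g j) (conjg G (h i) \<sigma>)"
    and iv2: "\<And>i. i \<in> {1..k} \<Longrightarrow> \<not> comm_mod G x (g i) (conjg G (h i) \<sigma>)"
  shows "(\<forall>S. S \<subseteq> {x, y} \<union> g ` {1..k} \<union> h ` {1..k} \<union> (\<lambda>i. conjg G (h i) \<sigma>) ` {1..k}
             \<longrightarrow> p_group_set p (generate G S) \<and> card (generate G S) \<ge> p ^ card S)
       \<and> N = generate G ({x, y, l} \<union> g ` {1..k} \<union> h ` {1..k})
       \<and> (let H = generate G ({x, y} \<union> g ` {1..k} \<union> h ` {1..k}
                      \<union> (\<lambda>i. conjg G (g i) \<sigma>) ` {1..k} \<union> (\<lambda>i. conjg G (h i) \<sigma>) ` {1..k})
          in H \<lhd> (G\<lparr>carrier := centraliser G (generate G {x, y})\<rparr>) \<and> p_group_set p H)"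
proof -
  interpret group G
    by (rule grp)
  have "x \<noteq> \<one>"
    using x_ord p_prime by auto
  then interpret comm_mod_configuration G p k x y l \<sigma> g h N
    using assms by (intro comm_mod_configuration.intro comm_mod_configuration_axioms.intro) auto
  show ?thesis
    using p_group_generate_card_ge N_eq_generate generate_eq_P P_normal P_p_group
    unfolding Let_def by auto
qed

end
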